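(* Let $p$ be an odd prime and $\alpha$ an indeterminate over $\mathbb F_p$. For $\gamma\in\{\alpha,-\alpha\}$ let \[ G^{(\gamma)}(X)=-\sum_{k=1}^{p-1}\frac{1}{k}\,\frac{X^{k}}{\prod_{s=1}^{k-1}b_{1,s}(\gamma)}\in\mathbb F_p(\alpha)[X] \] (empty product equal to $1$). Then \[ \prod_{k=1}^{p-1}(1+\alpha/k)^{k}\cdot G^{(\alpha)}(X)=-X^{p}\cdot G^{(-\alpha)}\!\left(\frac{1-\alpha^{p-1}}{X}\right) \] in the polynomial ring $\mathbb F_p(\alpha)[X]$.
   Context: $\mathbb F_p$ is the field of $p$ elements, $\binom{x}{m}=x(x-1)\cdots(x-m+1)/m!$. For integers $0<r,s<p$ (interpreted as elements of $\mathbb F_p$), $b_{r,s}(\alpha)=\sum_{k=0}^{p-1}(-r/s)^k\binom{r\alpha-1}{p-1-k}\binom{s\alpha-1}{k}\in\mathbb F_p[\alpha]$; $b_{1,s}(-\alpha)$ denotes the substitution of $-\alpha$ for $\alpha$. *)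

theory Defs
  imports "Berlekamp_Zassenhaus.Finite_Field" "HOL-Computational_Algebra.Fraction_Field"
begin

definition pbinom :: "'a::field poly \<Rightarrow> nat \<Rightarrow> 'a poly" where
  "pbinom q m = smult (inverse (of_nat (fact m))) (\<Prod>i<m. q - [:of_nat i:])"

definition bpoly :: "nat \<Rightarrow> nat \<Rightarrow> 'p::prime_card mod_ring poly" where
  "bpoly r s = (\<Sum>k=0..CARD('p) - 1.
      smult ((- (of_nat r / of_nat s)) ^ k)
        (pbinom (smult (of_nat r) [:0, 1:] - 1) (CARD('p) - 1 - k)
         * pbinom (smult (of_nat s) [:0, 1:] - 1) k))"

text \<open>G^(gamma)(X) in F_p(alpha)[X]; the argument b gives s \<mapsto> b_{1,s}(gamma).\<close>
definition Gpoly :: "(nat \<Rightarrow> 'p::prime_card mod_ring poly) \<Rightarrow> 'p mod_ring poly fract poly" where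
  "Gpoly b = - (\<Sum>k=1..CARD('p) - 1.
      monom (inverse (of_nat k) / (\<Prod>s=1..k-1. to_fract (b s))) k)"

end

theory Submission
  imports Defs "HOL-Number_Theory.Cong"
begin

(* For 1 \<le> s \<le> p - 2 the polynomial b_{1,s} splits over F_p into distinct linear factors:
   it has degree at most (p - 1)/2 (a finite-difference argument), takes the value 1 at 0, and
   vanishes at every a \<in> [1, p - 1] with a + (s a mod p) < p, a condition met by exactly one
   of a and p - a. Hence b_{1,s}(\<alpha>) = \<Prod>(1 - \<alpha>/a) over these a, which yields
   b_{1,s}(\<alpha>) b_{1,s}(-\<alpha>) = 1 - \<alpha>^(p-1) and b_{1,p-1-s} = b_{1,s}; and since each a is a
   root of exactly p - a - 1 of the b_{1,s},
     \<Prod>_k (1 + \<alpha>/k)^k = (1 - \<alpha>^(p-1)) \<Prod>_{s=1}^{p-2} b_{1,s}.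
   Combined, \<Prod>_k (1 + \<alpha>/k)^k \<Prod>_{s<p-k} b_{1,s}(-\<alpha>) = (1 - \<alpha>^(p-1))^(p-k) \<Prod>_{s<k} b_{1,s},
   which, with 1/(p - k) = -1/k, is the equality of the coefficients of X^k on both sides. *)

section \<open>Binomial coefficients over a field\<close>

text \<open>Unlike \<open>gchoose\<close>, this needs no characteristic \<open>0\<close>; it is the binomial coefficient
  only as long as \<open>m!\<close> is invertible, i.e.\ \<open>m < p\<close> in characteristic \<open>p\<close>.\<close>
definition fbinomial :: "'a::field \<Rightarrow> nat \<Rightarrow> 'a" where
  "fbinomial x m = (\<Prod>i<m. x - of_nat i) / of_nat (fact m)"

lemma poly_pbinom: "poly (pbinom q m) x = fbinomial (poly q x) m"
  unfolding pbinom_def fbinomial_def by (simp add: poly_prod divide_inverse mult.commute)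

lemma degree_pbinom:
  assumes "degree q \<le> 1"
  shows "degree (pbinom q m) \<le> m"
proof -
  have "degree (\<Prod>i<m. q - [:of_nat i:]) \<le> (\<Sum>i<m. degree (q - [:of_nat i:]))"
    using degree_prod_sum_le[of "{..<m}" "\<lambda>i. q - [:of_nat i:]"] by (simp add: o_def)
  also have "\<dots> \<le> (\<Sum>i<m. 1)"
    using assms by (intro sum_mono) (simp add: degree_diff_le)
  finally show ?thesis
    unfolding pbinom_def using degree_smult_le order_trans by fastforce
qed

lemma fbinomial_Suc:
  assumes "(of_nat (fact (Suc m)) :: 'a::field) \<noteq> 0"
  shows "fbinomial (x + 1 :: 'a) (Suc m) = fbinomial x (Suc m) + fbinomial x m"
proof -
  define Q where "Q = (\<Prod>i<m. x - of_nat i)"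
  define M where "M = (of_nat (Suc m) :: 'a)"
  define F where "F = (of_nat (fact m) :: 'a)"
  have "of_nat (fact (Suc m)) = M * F"
    unfolding M_def F_def by (simp only: fact_Suc of_nat_mult of_nat_id)
  with assms have nz: "M \<noteq> 0" "F \<noteq> 0"
    by auto
  have "fbinomial (x + 1) (Suc m) = (Q * (x - of_nat m) + Q * M) / (M * F)"
    unfolding fbinomial_def \<open>of_nat (fact (Suc m)) = M * F\<close> Q_def M_def
    by (subst prod.lessThan_Suc_shift) (simp add: algebra_simps)
  also have "\<dots> = Q * (x - of_nat m) / (M * F) + Q / F"
    using nz by (simp add: add_divide_distrib)
  also have "\<dots> = fbinomial x (Suc m) + fbinomial x m"
    unfolding fbinomial_def \<open>of_nat (fact (Suc m)) = M * F\<close> Q_def F_def by simp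
  finally show ?thesis .
qed

lemma prod_of_nat_diff_eq_fact_choose:
  "(\<Prod>i<j. of_nat n - of_nat i :: 'a::comm_ring_1) = of_nat (fact j * (n choose j))"
proof -
  have "(\<Prod>i<j. real n - real i) = real (fact j * (n choose j))"
    using gbinomial_mult_fact[of j "real n"] by (simp add: atLeast0LessThan binomial_gbinomial)
  then have "real_of_int (\<Prod>i<j. int n - int i) = real_of_int (int (fact j * (n choose j)))"
    by simp
  then have "(\<Prod>i<j. int n - int i) = int (fact j * (n choose j))"
    by (simp only: of_int_eq_iff)
  then have "of_int (\<Prod>i<j. int n - int i) = (of_int (int (fact j * (n choose j))) :: 'a)"
    by (rule arg_cong)
  then show ?thesis
    by (simp only: of_int_prod of_int_diff of_int_of_nat_eq)
qed

lemma fbinomial_of_nat: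
  "(of_nat (fact j) :: 'a::field) \<noteq> 0 \<Longrightarrow> fbinomial (of_nat n :: 'a) j = of_nat (n choose j)"
  unfolding fbinomial_def prod_of_nat_diff_eq_fact_choose by simp

lemma fbinomial_of_nat_eq_0: "n < m \<Longrightarrow> fbinomial (of_nat n :: 'a::field) m = 0"
  unfolding fbinomial_def by (subst prod_zero) auto

lemma fbinomial_minus_one:
  assumes "(of_nat (fact m) :: 'a::field) \<noteq> 0"
  shows "fbinomial (-1 :: 'a) m = (-1) ^ m"
proof -
  have "(\<Prod>i<m. (-1 - of_nat i :: 'a)) = (-1) ^ m * of_nat (fact m)"
    by (induction m) (simp_all add: algebra_simps)
  with assms show ?thesis
    unfolding fbinomial_def by simp
qed

lemma of_nat_fact_mod_ring_neq_0:
  assumes "j < CARD('p::prime_card)"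
  shows "(of_nat (fact j) :: 'p mod_ring) \<noteq> 0"
  using assms prime_dvd_fact_iff[OF prime_card[where 'a='p]]
  by (simp add: of_nat_eq_0_iff_char_dvd)

section \<open>Forward differences\<close>

definition fdiff :: "('a::ring_1 \<Rightarrow> 'a) \<Rightarrow> 'a \<Rightarrow> 'a" where
  "fdiff f x = f (x + 1) - f x"

lemma newton_interpolation:
  fixes f :: "'a::comm_ring_1 \<Rightarrow> 'a"
  shows "f (of_nat n) = (\<Sum>j\<le>n. of_nat (n choose j) * (fdiff ^^ j) f 0)"
proof (induction n arbitrary: f)
  case 0
  show ?case by simp
next
  case (Suc n)
  define a where "a j = (fdiff ^^ j) f 0" for j
  have shift: "(fdiff ^^ j) (fdiff f) 0 = a (Suc j)" for j
    unfolding a_def by (simp add: funpow_Suc_right del: funpow.simps)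
  have "f (of_nat (Suc n)) = fdiff f (of_nat n) + f (of_nat n)"
    by (simp add: fdiff_def add.commute)
  also have "\<dots> = (\<Sum>j\<le>n. of_nat (n choose j) * a (Suc j))
      + (\<Sum>j\<le>Suc n. of_nat (n choose j) * a j)"
    using Suc[of "fdiff f"] Suc[of f] shift by (simp add: a_def binomial_eq_0)
  also have "\<dots> = a 0 + (\<Sum>j\<le>n. of_nat (Suc n choose Suc j) * a (Suc j))"
    by (subst sum.atMost_Suc_shift) (simp add: sum.distrib algebra_simps)
  also have "\<dots> = (\<Sum>j\<le>Suc n. of_nat (Suc n choose j) * a j)"
    by (subst sum.atMost_Suc_shift) simp
  finally show ?case
    by (simp add: a_def)
qed

lemma degree_le_if_high_fdiffs_vanish:
  fixes f :: "'p::prime_card mod_ring poly"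
  assumes "degree f < CARD('p)" and "\<And>j. h < j \<Longrightarrow> (fdiff ^^ j) (poly f) 0 = 0"
  shows "degree f \<le> h"
proof (cases "h < CARD('p)")
  case False
  with assms(1) show ?thesis by simp
next
  case True
  define D where "D j = (fdiff ^^ j) (poly f) 0" for j
  define N where "N = (\<Sum>j\<le>h. smult (D j) (pbinom [:0, 1:] j))"
  have "degree N \<le> h"
    unfolding N_def
  proof (rule degree_sum_le)
    fix j assume "j \<in> {..h}"
    then show "degree (smult (D j) (pbinom [:0, 1:] j)) \<le> h"
      using degree_pbinom[of "[:0, 1::'p mod_ring:]" j] degree_smult_le order_trans by fastforce
  qed simp
  moreover have "poly f x = poly N x" for x
  proof -
    obtain n where n: "n < CARD('p)" "x = of_nat n"
      using surj_of_nat_mod_ring by blast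
    have "poly N x = (\<Sum>j\<le>h. of_nat (n choose j) * D j)"
      unfolding N_def n(2) poly_sum poly_smult poly_pbinom
      using True by (intro sum.cong refl) (simp add: fbinomial_of_nat of_nat_fact_mod_ring_neq_0)
    also have "\<dots> = (\<Sum>j\<le>n + h. of_nat (n choose j) * D j)"
      using assms(2) by (intro sum.mono_neutral_left) (auto simp: D_def)
    also have "\<dots> = (\<Sum>j\<le>n. of_nat (n choose j) * D j)"
      by (intro sum.mono_neutral_right) (auto simp: binomial_eq_0)
    also have "\<dots> = poly f x"
      unfolding n(2) D_def by (rule newton_interpolation[symmetric])
    finally show ?thesis ..
  qed
  ultimately have "f = N"
    using assms(1) True by (intro poly_eqI_degree[where A=UNIV]) auto
  with \<open>degree N \<le> h\<close> show ?thesis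
    by simp
qed

section \<open>Truncated binomial series\<close>

lemma cong_monom_iff:
  "[f = g] (mod monom 1 n) \<longleftrightarrow> (\<forall>k<n. coeff f k = coeff (g :: 'a::field poly) k)"
  by (simp add: cong_iff_dvd_diff monom_1_dvd_iff')

text \<open>The truncation modulo \<open>T\<^sup>n\<close> of the binomial series \<open>(1 + c T)\<^sup>x\<close>.\<close>
definition binomial_series :: "'a::field \<Rightarrow> 'a \<Rightarrow> nat \<Rightarrow> 'a poly" where
  "binomial_series c x n = (\<Sum>k<n. monom (c ^ k * fbinomial x k) k)"

lemma coeff_binomial_series:
  "coeff (binomial_series c x n) k = (if k < n then c ^ k * fbinomial x k else 0)"
  unfolding binomial_series_def by (simp add: coeff_sum coeff_monom)

lemma binomial_series_plus_one:
  fixes c x :: "'a::field"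
  assumes "\<And>m. m < n \<Longrightarrow> (of_nat (fact m) :: 'a) \<noteq> 0"
  shows "[binomial_series c (x + 1) n = [:1, c:] * binomial_series c x n] (mod monom 1 n)"
  unfolding cong_monom_iff
proof (intro allI impI)
  fix k assume k: "k < n"
  have mult: "[:1, c:] * binomial_series c x n
      = binomial_series c x n + pCons 0 (smult c (binomial_series c x n))"
    by (simp add: mult_pCons_left)
  show "coeff (binomial_series c (x + 1) n) k = coeff ([:1, c:] * binomial_series c x n) k"
  proof (cases k)
    case 0
    then show ?thesis
      unfolding mult using k by (simp add: coeff_binomial_series fbinomial_def)
  next
    case (Suc m)
    then show ?thesis
      unfolding mult using k Suc assms[of k] fbinomial_Suc[of m x]
      by (simp add: coeff_binomial_series algebra_simps)
  qed
qed

lemma binomial_series_plus_of_nat: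
  fixes c x :: "'a::field"
  assumes "\<And>m. m < n \<Longrightarrow> (of_nat (fact m) :: 'a) \<noteq> 0"
  shows "[binomial_series c (x + of_nat j) n = [:1, c:] ^ j * binomial_series c x n] (mod monom 1 n)"
proof (induction j)
  case 0
  show ?case by simp
next
  case (Suc j)
  have "[binomial_series c (x + of_nat j + 1) n = [:1, c:] * binomial_series c (x + of_nat j) n]
      (mod monom 1 n)"
    by (rule binomial_series_plus_one[OF assms])
  also have "[[:1, c:] * binomial_series c (x + of_nat j) n
      = [:1, c:] * ([:1, c:] ^ j * binomial_series c x n)] (mod monom 1 n)"
    by (intro cong_mult cong_refl Suc.IH)
  finally show ?case
    by (simp add: algebra_simps)
qed

lemma fdiff_funpow_coeff:
  fixes F :: "'a::field \<Rightarrow> 'a poly"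
  assumes "\<And>x. [F (x + 1) = P * F x] (mod monom 1 n)" and "k < n"
  shows "(fdiff ^^ j) (\<lambda>x. coeff (R * F x) k) = (\<lambda>x. coeff (R * (P - 1) ^ j * F x) k)"
proof (induction j arbitrary: R)
  case 0
  show ?case by simp
next
  case (Suc j)
  have "fdiff (\<lambda>x. coeff (R * F x) k) = (\<lambda>x. coeff (R * (P - 1) * F x) k)"
  proof
    fix x
    have "[R * F (x + 1) = R * (P * F x)] (mod monom 1 n)"
      by (intro cong_mult cong_refl assms(1))
    then have "coeff (R * F (x + 1)) k = coeff (R * (P * F x)) k"
      using assms(2) unfolding cong_monom_iff by blast
    then show "fdiff (\<lambda>x. coeff (R * F x) k) x = coeff (R * (P - 1) * F x) k"
      unfolding fdiff_def by (simp add: algebra_simps)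
  qed
  then show ?case
    using Suc.IH[of "R * (P - 1)"] by (simp add: funpow_Suc_right mult.assoc del: funpow.simps)
qed

lemma coeff_1_linear_power: "coeff ([:1, c:] ^ n) 1 = of_nat n * (c :: 'a::comm_ring_1)"
  by (induction n) (simp_all add: mult_pCons_left coeff_0_power algebra_simps)

section \<open>The degree of \<open>b\<^sub>1\<^sub>,\<^sub>s\<close>\<close>

lemma poly_bpoly_one:
  "poly (bpoly 1 s) (x :: 'p::prime_card mod_ring) = (\<Sum>k=0..CARD('p) - 1.
     (- (1 / of_nat s)) ^ k * (fbinomial (x - 1) (CARD('p) - 1 - k) * fbinomial (of_nat s * x - 1) k))"
  unfolding bpoly_def by (simp add: poly_sum poly_pbinom ac_simps)

lemma poly_bpoly_one_eq_coeff:
  "poly (bpoly 1 s) (x :: 'p::prime_card mod_ring) = coeff (binomial_series 1 (x - 1) CARD('p)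
     * binomial_series (- (1 / of_nat s)) (of_nat s * x - 1) CARD('p)) (CARD('p) - 1)"
proof -
  let ?p = "CARD('p)" and ?c = "- (1 / of_nat s) :: 'p mod_ring"
  have "coeff (binomial_series 1 (x - 1) ?p * binomial_series ?c (of_nat s * x - 1) ?p) (?p - 1)
      = (\<Sum>i=0..?p - 1. fbinomial (x - 1) i
          * (?c ^ (?p - 1 - i) * fbinomial (of_nat s * x - 1) (?p - 1 - i)))"
    unfolding coeff_mult atMost_atLeast0
  proof (intro sum.cong refl)
    fix i assume "i \<in> {0..?p - 1}"
    then have "i < ?p" "?p - 1 - i < ?p"
      using nontriv[where 'a='p] by auto
    then show "coeff (binomial_series 1 (x - 1) ?p) i
          * coeff (binomial_series ?c (of_nat s * x - 1) ?p) (?p - 1 - i)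
        = fbinomial (x - 1) i * (?c ^ (?p - 1 - i) * fbinomial (of_nat s * x - 1) (?p - 1 - i))"
      by (simp add: coeff_binomial_series)
  qed
  also have "\<dots> = (\<Sum>i=0..?p - 1. fbinomial (x - 1) (?p - 1 - (?p - 1 - i))
      * (?c ^ (?p - 1 - i) * fbinomial (of_nat s * x - 1) (?p - 1 - i)))"
    by (intro sum.cong refl) (use nontriv[where 'a='p] in auto)
  also have "\<dots> = (\<Sum>k=0..?p - 1.
      fbinomial (x - 1) (?p - 1 - k) * (?c ^ k * fbinomial (of_nat s * x - 1) k))"
    by (subst (2) sum.atLeastAtMost_rev) simp
  finally show ?thesis
    unfolding poly_bpoly_one by (simp add: ac_simps)
qed

text \<open>The binomial sum defining \<open>b\<^sub>1\<^sub>,\<^sub>s(x)\<close> is the coefficient of \<open>T\<^sup>p\<^sup>-\<^sup>1\<close> in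
  \<open>(1 + T)\<^sup>x\<^sup>-\<^sup>1 (1 - T/s)\<^sup>s\<^sup>x\<^sup>-\<^sup>1\<close>, and shifting \<open>x\<close> by one multiplies this series by
  \<open>(1 + T)(1 - T/s)\<^sup>s \<equiv> 1 (mod T\<^sup>2)\<close>; so a difference of order \<open>j\<close> is divisible by \<open>T\<^sup>2\<^sup>j\<close>.\<close>
lemma fdiff_funpow_bpoly_one_eq_0:
  assumes "\<not> CARD('p::prime_card) dvd s" and "CARD('p) - 1 < 2 * j"
  shows "(fdiff ^^ j) (poly (bpoly 1 s)) x = (0 :: 'p mod_ring)"
proof -
  let ?p = "CARD('p)"
  define c where "c = - (1 / of_nat s :: 'p mod_ring)"
  define F where "F x = binomial_series 1 (x - 1) ?p * binomial_series c (of_nat s * x - 1) ?p"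
    for x :: "'p mod_ring"
  define P where "P = [:1, 1:] * [:1, c:] ^ s"
  have fact_nz: "(of_nat (fact m) :: 'p mod_ring) \<noteq> 0" if "m < ?p" for m
    using that by (rule of_nat_fact_mod_ring_neq_0)
  have shift: "[F (x + 1) = P * F x] (mod monom 1 ?p)" for x
  proof -
    have "[binomial_series 1 ((x - 1) + 1) ?p * binomial_series c ((of_nat s * x - 1) + of_nat s) ?p
        = ([:1, 1:] * binomial_series 1 (x - 1) ?p)
          * ([:1, c:] ^ s * binomial_series c (of_nat s * x - 1) ?p)] (mod monom 1 ?p)"
      by (intro cong_mult binomial_series_plus_one binomial_series_plus_of_nat fact_nz)
    moreover have "F (x + 1) = binomial_series 1 ((x - 1) + 1) ?p
        * binomial_series c ((of_nat s * x - 1) + of_nat s) ?p"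
      by (simp add: F_def algebra_simps)
    ultimately show ?thesis
      by (simp only: F_def P_def mult_ac)
  qed
  have "of_nat s \<noteq> (0 :: 'p mod_ring)"
    using assms(1) by (simp add: of_nat_eq_0_iff_char_dvd)
  then have "coeff ([:1, c:] ^ s) 1 = -1"
    using coeff_1_linear_power[of c s] by (simp add: c_def)
  then have "coeff (P - 1) 0 = 0" "coeff (P - 1) 1 = 0"
    by (simp_all add: P_def mult_pCons_left coeff_0_power)
  then have "\<forall>k<2. coeff (P - 1) k = 0"
    by (auto simp: less_2_cases_iff)
  then have "monom 1 2 dvd P - 1"
    by (simp add: monom_1_dvd_iff')
  then have "monom 1 (2 * j) dvd (P - 1) ^ j"
    using dvd_power_same by (fastforce simp: monom_power mult.commute)
  then have "monom 1 (2 * j) dvd 1 * (P - 1) ^ j * F x"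
    by simp
  then have "coeff (1 * (P - 1) ^ j * F x) (?p - 1) = 0"
    using assms(2) by (simp add: monom_1_dvd_iff')
  moreover have "poly (bpoly 1 s) = (\<lambda>x. coeff (1 * F x) (?p - 1))"
    by (rule ext) (simp only: F_def c_def poly_bpoly_one_eq_coeff mult_1_left)
  moreover have "?p - 1 < ?p"
    by simp
  ultimately show ?thesis
    using fdiff_funpow_coeff[where F=F and P=P and n="?p" and k="?p - 1" and j=j and R=1, OF shift]
    by simp
qed

lemma degree_bpoly: "degree (bpoly r s :: 'p::prime_card mod_ring poly) \<le> CARD('p) - 1"
proof -
  have lin: "degree (smult (of_nat t) [:0, 1:] - 1 :: 'p mod_ring poly) \<le> 1" for t
    by (rule degree_diff_le) (auto intro: order_trans[OF degree_smult_le])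
  have summand: "degree (smult a (pbinom (smult (of_nat r) [:0, 1:] - 1) (CARD('p) - 1 - k)
      * pbinom (smult (of_nat s) [:0, 1:] - 1 :: 'p mod_ring poly) k)) \<le> CARD('p) - 1"
    if "k \<le> CARD('p) - 1" for a k
  proof -
    have "degree (pbinom (smult (of_nat r) [:0, 1:] - 1) (CARD('p) - 1 - k)
        * pbinom (smult (of_nat s) [:0, 1:] - 1 :: 'p mod_ring poly) k) \<le> (CARD('p) - 1 - k) + k"
      by (rule order_trans[OF degree_mult_le add_mono[OF degree_pbinom[OF lin] degree_pbinom[OF lin]]])
    also have "\<dots> = CARD('p) - 1"
      using that by simp
    finally show ?thesis
      by (rule order_trans[OF degree_smult_le])
  qed
  show ?thesis
    unfolding bpoly_def by (intro degree_sum_le summand) auto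
qed

lemma degree_bpoly_one:
  assumes "\<not> CARD('p::prime_card) dvd s"
  shows "degree (bpoly 1 s :: 'p mod_ring poly) \<le> (CARD('p) - 1) div 2"
proof (rule degree_le_if_high_fdiffs_vanish)
  show "degree (bpoly 1 s :: 'p mod_ring poly) < CARD('p)"
    using degree_bpoly[of 1 s, where 'p='p] nontriv[where 'a='p] by linarith
  show "(fdiff ^^ j) (poly (bpoly 1 s :: 'p mod_ring poly)) 0 = 0" if "(CARD('p) - 1) div 2 < j" for j
  proof (rule fdiff_funpow_bpoly_one_eq_0[OF assms])
    show "CARD('p) - 1 < 2 * j"
      using that by presburger
  qed
qed

section \<open>Factorization of \<open>b\<^sub>1\<^sub>,\<^sub>s\<close>\<close>

lemma poly_bpoly_one_of_nat_eq_0: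
  assumes "a \<in> {1..<CARD('p::prime_card)}" and "\<not> CARD('p) dvd s"
    and "a + s * a mod CARD('p) \<le> CARD('p)"
  shows "poly (bpoly 1 s) (of_nat a :: 'p mod_ring) = 0"
proof -
  let ?p = "CARD('p)"
  define r where "r = s * a mod ?p"
  have "\<not> ?p dvd s * a"
    using assms(1,2) prime_card[where 'a='p] by (auto simp: prime_dvd_mult_iff dest: dvd_imp_le)
  then have "0 < r"
    unfolding r_def by (simp add: mod_greater_zero_iff_not_dvd)
  have a: "of_nat a - 1 = (of_nat (a - 1) :: 'p mod_ring)"
    using assms(1) by (simp add: of_nat_diff)
  have sa: "of_nat s * of_nat a - 1 = (of_nat (r - 1) :: 'p mod_ring)"
    using \<open>0 < r\<close> of_nat_mod_CHAR[where x="s * a" and 'a="'p mod_ring"]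
    by (simp add: r_def of_nat_diff)
  have terms: "fbinomial (of_nat (a - 1) :: 'p mod_ring) (?p - 1 - k) * fbinomial (of_nat (r - 1)) k = 0"
    for k
  proof (cases "a - 1 < ?p - 1 - k")
    case False
    then have "r - 1 < k"
      using assms(1,3) \<open>0 < r\<close> unfolding r_def by auto
    then show ?thesis
      by (simp add: fbinomial_of_nat_eq_0)
  qed (simp add: fbinomial_of_nat_eq_0)
  show ?thesis
    unfolding poly_bpoly_one a sa terms by simp
qed

lemma poly_bpoly_one_0:
  assumes "odd CARD('p::prime_card)" and "s \<in> {1..CARD('p) - 2}"
  shows "poly (bpoly 1 s) (0 :: 'p mod_ring) = 1"
proof -
  let ?p = "CARD('p)" and ?c = "- (1 / of_nat s) :: 'p mod_ring"
  have s: "of_nat s \<noteq> (0 :: 'p mod_ring)" "of_nat (s + 1) \<noteq> (0 :: 'p mod_ring)"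
    unfolding of_nat_eq_0_iff_char_dvd semiring_char_mod_ring using assms(2) by (auto dest: dvd_imp_le)
  have "?c \<noteq> 1"
  proof
    assume "?c = 1"
    with s(1) have "of_nat s = (-1 :: 'p mod_ring)"
      by (simp add: field_simps)
    with s(2) show False
      by simp
  qed
  have "poly (bpoly 1 s) 0 = (\<Sum>k=0..?p - 1. ?c ^ k)"
    unfolding poly_bpoly_one
  proof (intro sum.cong refl)
    fix k assume "k \<in> {0..?p - 1}"
    then have k: "k < ?p" "?p - 1 - k < ?p" "?p - 1 - k + k = ?p - 1"
      using nontriv[where 'a='p] by auto
    moreover have "even (?p - 1)"
      using assms(1) by simp
    ultimately have "(-1 :: 'p mod_ring) ^ (?p - 1 - k) * (-1) ^ k = 1"
      by (simp flip: power_add)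
    then show "?c ^ k * (fbinomial (0 - 1) (?p - 1 - k) * fbinomial (of_nat s * 0 - 1) k) = ?c ^ k"
      using k by (simp add: fbinomial_minus_one of_nat_fact_mod_ring_neq_0)
  qed
  also have "\<dots> = (\<Sum>k<?p. ?c ^ k)"
    by (rule sum.cong) (use nontriv[where 'a='p] in auto)
  also have "\<dots> = (?c ^ ?p - 1) / (?c - 1)"
    by (rule geometric_sum[OF \<open>?c \<noteq> 1\<close>])
  also have "\<dots> = 1"
    using \<open>?c \<noteq> 1\<close> finite_field_power_card_eq_same[of ?c] by simp
  finally show ?thesis .
qed

lemma mod_add_mod_eq_modulus:
  fixes x y p :: nat
  assumes "p dvd x + y" and "\<not> p dvd x"
  shows "x mod p + y mod p = p"
proof -
  have "\<not> p dvd y"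
    using assms by (metis dvd_add_right_iff add.commute)
  then have pos: "0 < x mod p" "0 < y mod p"
    using assms(2) by (simp_all add: mod_greater_zero_iff_not_dvd)
  have "p \<noteq> 0"
  proof
    assume "p = 0"
    with assms show False
      by simp
  qed
  then have "x mod p + y mod p < 2 * p"
    using mod_less_divisor[of p x] mod_less_divisor[of p y] by linarith
  moreover have "p dvd x mod p + y mod p"
    using assms(1) by (simp add: dvd_eq_mod_eq_0 mod_add_eq)
  then obtain q where "x mod p + y mod p = p * q"
    by blast
  ultimately show ?thesis
    using pos by (cases q) (auto simp: less_Suc_eq)
qed

text \<open>These are the roots of \<open>b\<^sub>1\<^sub>,\<^sub>s\<close> in \<open>[1, p - 1]\<close>, see \<open>bpoly_one_eq_prod\<close>.\<close>
definition root_set :: "nat \<Rightarrow> nat \<Rightarrow> nat set" where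
  "root_set p s = {a \<in> {1..<p}. a + s * a mod p < p}"

lemma root_set_reflect_iff:
  assumes "prime p" and "s \<in> {1..p - 2}" and "a \<in> {1..<p}"
  shows "p - a \<in> root_set p s \<longleftrightarrow> a \<notin> root_set p s"
proof -
  have nd: "\<not> p dvd s * a" "\<not> p dvd (s + 1) * a"
    by (simp_all only: prime_dvd_mult_iff[OF assms(1)]) (use assms(2,3) in \<open>auto dest: dvd_imp_le\<close>)
  have "s * a mod p + s * (p - a) mod p = p"
  proof (rule mod_add_mod_eq_modulus)
    show "p dvd s * a + s * (p - a)"
      using assms(3) by (simp flip: add_mult_distrib2)
  qed (fact nd)
  moreover have "a + s * a mod p \<noteq> p"
  proof
    assume "a + s * a mod p = p"
    then have "(a + s * a) mod p = 0"
      by (metis mod_add_right_eq mod_self)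
    moreover have "(s + 1) * a = a + s * a"
      by simp
    ultimately show False
      using nd(2) by (metis dvd_eq_mod_eq_0)
  qed
  ultimately show ?thesis
    using assms(3) unfolding root_set_def by auto
qed

lemma
  assumes "prime p" and "s \<in> {1..p - 2}"
  shows root_set_Un_reflect: "root_set p s \<union> (\<lambda>a. p - a) ` root_set p s = {1..<p}"
    and root_set_Int_reflect: "root_set p s \<inter> (\<lambda>a. p - a) ` root_set p s = {}"
proof -
  have sub: "root_set p s \<subseteq> {1..<p}"
    by (auto simp: root_set_def)
  show "root_set p s \<union> (\<lambda>a. p - a) ` root_set p s = {1..<p}"
  proof
    show "{1..<p} \<subseteq> root_set p s \<union> (\<lambda>a. p - a) ` root_set p s"
    proof
      fix a assume a: "a \<in> {1..<p}"
      show "a \<in> root_set p s \<union> (\<lambda>a. p - a) ` root_set p s"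
      proof (cases "a \<in> root_set p s")
        case False
        then have "p - a \<in> root_set p s"
          using root_set_reflect_iff[OF assms a] by blast
        moreover have "a = p - (p - a)"
          using a by simp
        ultimately show ?thesis
          by blast
      qed simp
    qed
  qed (use sub in \<open>auto simp: root_set_def\<close>)
  show "root_set p s \<inter> (\<lambda>a. p - a) ` root_set p s = {}"
    using root_set_reflect_iff[OF assms] sub by auto
qed

lemma card_root_set:
  assumes "prime p" and "s \<in> {1..p - 2}"
  shows "2 * card (root_set p s) = p - 1"
proof -
  have "inj_on (\<lambda>a. p - a) (root_set p s)"
    by (rule inj_onI) (auto simp: root_set_def)
  then have "card ((\<lambda>a. p - a) ` root_set p s) = card (root_set p s)"
    by (rule card_image)
  moreover have "finite (root_set p s)"
    by (simp add: root_set_def)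
  then have "card (root_set p s \<union> (\<lambda>a. p - a) ` root_set p s)
      = card (root_set p s) + card ((\<lambda>a. p - a) ` root_set p s)"
    by (intro card_Un_disjoint finite_imageI root_set_Int_reflect[OF assms])
  ultimately show ?thesis
    using root_set_Un_reflect[OF assms] by simp
qed

lemma root_set_reflect_index:
  assumes "prime p" and "s \<in> {1..p - 2}"
  shows "root_set p (p - 1 - s) = root_set p s"
proof -
  have "a + (p - 1 - s) * a mod p < p \<longleftrightarrow> a + s * a mod p < p" if a: "a \<in> {1..<p}" for a
  proof -
    define r where "r = s * a mod p"
    define r' where "r' = (p - 1 - s) * a mod p"
    have "\<not> p dvd s * a" "\<not> p dvd (p - 1 - s) * a"
      using assms a by (auto simp: prime_dvd_mult_iff dest: dvd_imp_le)
    then have "0 < r" "r < p"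
      using a by (auto simp: r_def mod_greater_zero_iff_not_dvd)
    have "r' + (s + 1) * a mod p = p"
      unfolding r'_def
    proof (rule mod_add_mod_eq_modulus)
      have "(p - 1 - s) + (s + 1) = p"
        using assms(2) by auto
      then have "(p - 1 - s) * a + (s + 1) * a = p * a"
        by (metis add_mult_distrib)
      then show "p dvd (p - 1 - s) * a + (s + 1) * a"
        by simp
    qed fact
    moreover have "(s + 1) * a mod p = (a + r) mod p"
      by (simp add: r_def mod_add_right_eq algebra_simps)
    moreover have "(a + r) mod p = (if a + r < p then a + r else a + r - p)"
      using a \<open>r < p\<close> by (auto simp: mod_if)
    ultimately have "a + r' < p \<longleftrightarrow> a + r < p"
      using \<open>0 < r\<close> \<open>r < p\<close> by (auto split: if_splits)
    then show ?thesis
      by (simp only: r_def r'_def)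
  qed
  then show ?thesis
    unfolding root_set_def by blast
qed

lemma card_root_set_containing:
  assumes "prime p" and "a \<in> {1..<p}"
  shows "card {s \<in> {1..p - 2}. a \<in> root_set p s} = p - a - 1"
proof -
  define f where "f s = s * a mod p" for s
  have "\<not> p dvd a"
    using assms(2) by (auto dest: dvd_imp_le)
  then have "coprime a p"
    using assms(1) prime_imp_coprime[of p a] by (simp add: coprime_commute)
  have f_range: "f s \<in> {1..<p}" if "s \<in> {1..<p}" for s
    using assms that by (auto simp: f_def prime_dvd_mult_iff mod_greater_zero_iff_not_dvd
      Suc_le_eq prime_gt_0_nat dest: dvd_imp_le)
  have inj: "inj_on f {1..<p}"
  proof (rule inj_onI)
    fix s t assume "s \<in> {1..<p}" "t \<in> {1..<p}" "f s = f t"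
    then have "[s = t] (mod p)"
      using cong_mult_rcancel_nat[OF \<open>coprime a p\<close>] by (simp add: f_def cong_def)
    with \<open>s \<in> {1..<p}\<close> \<open>t \<in> {1..<p}\<close> show "s = t"
      by (auto intro: cong_less_modulus_unique_nat)
  qed
  then have img: "f ` {1..<p} = {1..<p}"
    using f_range by (intro endo_inj_surj) auto
  have "f (p - 1) + a mod p = p"
    unfolding f_def
  proof (rule mod_add_mod_eq_modulus)
    show "p dvd (p - 1) * a + a"
      using assms(2) by (simp add: algebra_simps)
    show "\<not> p dvd (p - 1) * a"
      using assms by (auto simp: prime_dvd_mult_iff dest: dvd_imp_le)
  qed
  then have "f (p - 1) = p - a"
    using assms(2) by simp
  have range: "s \<le> p - 2" if "s \<in> {1..<p}" "f s < p - a" for s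
  proof -
    have "s \<noteq> p - 1"
      using that(2) \<open>f (p - 1) = p - a\<close> by auto
    with that(1) show ?thesis
      by auto
  qed
  have "a \<in> root_set p s \<longleftrightarrow> f s < p - a" for s
    using assms(2) by (auto simp: root_set_def f_def)
  then have "{s \<in> {1..p - 2}. a \<in> root_set p s} = {s \<in> {1..<p}. f s < p - a}"
    using range assms(2) by auto
  moreover have "card {s \<in> {1..<p}. f s < p - a} = card (f ` {s \<in> {1..<p}. f s < p - a})"
    by (rule card_image[symmetric], rule inj_on_subset[OF inj]) auto
  moreover have "f ` {s \<in> {1..<p}. f s < p - a} = {y \<in> f ` {1..<p}. y < p - a}"
    by auto
  then have "f ` {s \<in> {1..<p}. f s < p - a} = {1..<p - a}"
    unfolding img by auto
  ultimately show ?thesis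
    by simp
qed

lemma power_card_minus_one_mod_ring:
  assumes "x \<noteq> 0"
  shows "x ^ (CARD('p) - 1) = (1 :: 'p::prime_card mod_ring)"
proof -
  have "CARD('p) = Suc (CARD('p) - 1)"
    using nontriv[where 'a='p] by simp
  then have "x * x ^ (CARD('p) - 1) = x * 1"
    using finite_field_power_card_eq_same[of x] by (metis CARD_mod_ring mult_1_right power_Suc)
  with assms show ?thesis
    by simp
qed

lemma degree_prod_linear_le: "degree (\<Prod>a\<in>A. [:1, c a:]) \<le> card A"
  for c :: "'b \<Rightarrow> 'a::comm_ring_1"
proof (cases "finite A")
  case True
  have "degree (\<Prod>a\<in>A. [:1, c a:]) \<le> (\<Sum>a\<in>A. degree [:1, c a:])"
    using degree_prod_sum_le[OF True, of "\<lambda>a. [:1, c a:]"] by (simp add: o_def)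
  also have "\<dots> \<le> card A"
    using sum_mono[of A "\<lambda>a. degree [:1, c a:]" "\<lambda>_. 1"] by simp
  finally show ?thesis .
qed simp

lemma one_minus_monom_eq_prod:
  "1 - monom 1 (CARD('p) - 1)
    = (\<Prod>a\<in>{1..<CARD('p)}. [:1, - inverse (of_nat a :: 'p::prime_card mod_ring):])"
proof (rule poly_eqI_degree[where A=UNIV])
  let ?p = "CARD('p)"
  fix x :: "'p mod_ring"
  obtain n where n: "n < ?p" "x = of_nat n"
    using surj_of_nat_mod_ring by blast
  show "poly (1 - monom 1 (?p - 1)) x = poly (\<Prod>a\<in>{1..<?p}. [:1, - inverse (of_nat a):]) x"
  proof (cases "n = 0")
    case True
    then show ?thesis
      using n nontriv[where 'a='p] by (simp add: poly_prod poly_monom)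
  next
    case False
    then have "x \<noteq> 0"
      using n by (auto simp: of_nat_eq_0_iff_char_dvd dest: dvd_imp_le)
    then have "poly (1 - monom 1 (?p - 1)) x = 0"
      using power_card_minus_one_mod_ring[OF \<open>x \<noteq> 0\<close>] by (simp add: poly_monom)
    moreover have "poly (\<Prod>a\<in>{1..<?p}. [:1, - inverse (of_nat a):]) x = 0"
      unfolding poly_prod
      by (rule prod_zero) (use n False \<open>x \<noteq> 0\<close> in \<open>auto intro!: bexI[of _ n]\<close>)
    ultimately show ?thesis
      by simp
  qed
next
  let ?p = "CARD('p)"
  show "degree (\<Prod>a\<in>{1..<?p}. [:1, - inverse (of_nat a :: 'p mod_ring):]) < card (UNIV :: 'p mod_ring set)"
    using degree_prod_linear_le[of "\<lambda>a. - inverse (of_nat a :: 'p mod_ring)" "{1..<?p}"] nontriv[where 'a='p]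
    by simp
  have "degree (1 - monom 1 (?p - 1) :: 'p mod_ring poly) \<le> ?p - 1"
    by (rule degree_diff_le) (auto intro: order_trans[OF degree_monom_le])
  then show "degree (1 - monom 1 (?p - 1) :: 'p mod_ring poly) < card (UNIV :: 'p mod_ring set)"
    using nontriv[where 'a='p] by simp
qed

lemma inj_on_of_nat_mod_ring: "inj_on (of_nat :: nat \<Rightarrow> 'p::prime_card mod_ring) {..<CARD('p)}"
proof (rule inj_onI)
  fix a b assume "a \<in> {..<CARD('p)}" "b \<in> {..<CARD('p)}" "(of_nat a :: 'p mod_ring) = of_nat b"
  then have "[a = b] (mod CARD('p))" "a < CARD('p)" "b < CARD('p)"
    by (auto simp: of_nat_eq_iff_cong_CHAR)
  then show "a = b"
    by (rule cong_less_modulus_unique_nat)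
qed

text \<open>Both sides have degree at most \<open>(p - 1)/2 = |root_set p s|\<close> and agree at \<open>0\<close> and on
  \<open>root_set p s\<close>.\<close>
lemma bpoly_one_eq_prod:
  assumes "odd CARD('p::prime_card)" and "s \<in> {1..CARD('p) - 2}"
  shows "bpoly 1 s = (\<Prod>a\<in>root_set CARD('p) s. [:1, - inverse (of_nat a :: 'p mod_ring):])"
proof -
  let ?p = "CARD('p)" and ?S = "root_set CARD('p) s"
  let ?P = "\<Prod>a\<in>?S. [:1, - inverse (of_nat a :: 'p mod_ring):]"
  let ?A = "(of_nat :: nat \<Rightarrow> 'p mod_ring) ` insert 0 ?S"
  have S: "?S \<subseteq> {1..<?p}" "finite ?S"
    by (auto simp: root_set_def)
  then have "inj_on (of_nat :: nat \<Rightarrow> 'p mod_ring) (insert 0 ?S)"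
    by (intro inj_on_subset[OF inj_on_of_nat_mod_ring]) auto
  then have "card ?A = card (insert 0 ?S)"
    by (rule card_image)
  also have "\<dots> = card ?S + 1"
    using S by (subst card_insert_disjoint) auto
  finally have card_A: "card ?A = card ?S + 1" .
  have "\<not> ?p dvd s"
    using assms(2) by (auto dest: dvd_imp_le)
  then have deg_b: "degree (bpoly 1 s :: 'p mod_ring poly) \<le> card ?S"
    using degree_bpoly_one card_root_set[OF prime_card assms(2)] by fastforce
  show ?thesis
  proof (rule poly_eqI_degree[where A="?A"])
    fix x assume "x \<in> ?A"
    then consider "x = 0" | a where "a \<in> ?S" "x = of_nat a"
      by auto
    then show "poly (bpoly 1 s) x = poly ?P x"
    proof cases
      case 1
      then show ?thesis
        using poly_bpoly_one_0[OF assms] by (simp add: poly_prod)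
    next
      case 2
      then have "a \<in> {1..<?p}" "a + s * a mod ?p \<le> ?p" "(of_nat a :: 'p mod_ring) \<noteq> 0"
        using S(1) by (auto simp: root_set_def of_nat_eq_0_iff_char_dvd dest: dvd_imp_le)
      then have "poly (bpoly 1 s) x = 0" "poly ?P x = 0"
        using 2 S(2) \<open>\<not> ?p dvd s\<close> poly_bpoly_one_of_nat_eq_0
        by (auto simp: poly_prod intro!: prod_zero bexI[of _ a])
      then show ?thesis
        by simp
    qed
  qed (use card_A deg_b degree_prod_linear_le[of "\<lambda>a. - inverse (of_nat a :: 'p mod_ring)" ?S] in auto)
qed

lemma bpoly_one_reflect_index:
  assumes "odd CARD('p::prime_card)" and "s \<in> {1..CARD('p) - 2}"
  shows "bpoly 1 (CARD('p) - 1 - s) = (bpoly 1 s :: 'p mod_ring poly)"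
proof -
  have "CARD('p) - 1 - s \<in> {1..CARD('p) - 2}"
    using assms(2) by auto
  then have "bpoly 1 (CARD('p) - 1 - s)
      = (\<Prod>a\<in>root_set CARD('p) (CARD('p) - 1 - s). [:1, - inverse (of_nat a :: 'p mod_ring):])"
    by (rule bpoly_one_eq_prod[OF assms(1)])
  also have "root_set CARD('p) (CARD('p) - 1 - s) = root_set CARD('p) s"
    by (rule root_set_reflect_index[OF prime_card assms(2)])
  also have "(\<Prod>a\<in>root_set CARD('p) s. [:1, - inverse (of_nat a :: 'p mod_ring):]) = bpoly 1 s"
    by (rule bpoly_one_eq_prod[OF assms, symmetric])
  finally show ?thesis .
qed

lemma bpoly_one_mult_reflect:
  assumes "odd CARD('p::prime_card)" and "s \<in> {1..CARD('p) - 2}"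
  shows "bpoly 1 s * pcompose (bpoly 1 s) [:0, -1:] = (1 - monom 1 (CARD('p) - 1) :: 'p mod_ring poly)"
proof -
  let ?p = "CARD('p)" and ?S = "root_set CARD('p) s"
  define f where "f a = [:1, - inverse (of_nat a :: 'p mod_ring):]" for a
  have p: "prime ?p"
    by (rule prime_card)
  have "pcompose (f a) [:0, -1:] = f (?p - a)" if "a \<in> ?S" for a
    using that by (simp add: f_def root_set_def of_nat_diff)
  then have "pcompose (bpoly 1 s) [:0, -1:] = (\<Prod>a\<in>?S. f (?p - a))"
    unfolding bpoly_one_eq_prod[OF assms] f_def[symmetric] pcompose_prod by (rule prod.cong[OF refl])
  also have "\<dots> = (\<Prod>b\<in>(\<lambda>a. ?p - a) ` ?S. f b)"
    by (rule prod.reindex[symmetric, unfolded comp_def]) (auto intro!: inj_onI simp: root_set_def)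
  finally have "bpoly 1 s * pcompose (bpoly 1 s) [:0, -1:]
      = (\<Prod>a\<in>?S. f a) * (\<Prod>b\<in>(\<lambda>a. ?p - a) ` ?S. f b)"
    unfolding bpoly_one_eq_prod[OF assms] f_def by simp
  also have "\<dots> = (\<Prod>a\<in>?S \<union> (\<lambda>a. ?p - a) ` ?S. f a)"
    by (rule prod.union_disjoint[symmetric, OF _ _ root_set_Int_reflect[OF p assms(2)]])
      (simp_all add: root_set_def)
  also have "\<dots> = 1 - monom 1 (?p - 1)"
    unfolding root_set_Un_reflect[OF p assms(2)] f_def by (rule one_minus_monom_eq_prod[symmetric])
  finally show ?thesis .
qed

lemma prod_linear_power_eq_prod_bpoly_one:
  assumes "odd CARD('p::prime_card)"
  shows "(\<Prod>k\<in>{1..<CARD('p)}. [:1, inverse (of_nat k :: 'p mod_ring):] ^ k)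
    = (1 - monom 1 (CARD('p) - 1)) * (\<Prod>s\<in>{1..CARD('p) - 2}. bpoly 1 s)"
proof -
  let ?p = "CARD('p)"
  define f where "f a = [:1, - inverse (of_nat a :: 'p mod_ring):]" for a
  have p: "prime ?p"
    by (rule prime_card)
  have "(\<Prod>s\<in>{1..?p - 2}. bpoly 1 s)
      = (\<Prod>s\<in>{1..?p - 2}. \<Prod>a\<in>{a \<in> {1..<?p}. a + s * a mod ?p < ?p}. f a)"
  proof (rule prod.cong[OF refl])
    fix s assume "s \<in> {1..?p - 2}"
    show "bpoly 1 s = (\<Prod>a\<in>{a \<in> {1..<?p}. a + s * a mod ?p < ?p}. f a)"
      unfolding bpoly_one_eq_prod[OF assms \<open>s \<in> {1..?p - 2}\<close>] root_set_def f_def ..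
  qed
  also have "\<dots> = (\<Prod>a\<in>{1..<?p}. \<Prod>s | s \<in> {1..?p - 2} \<and> a + s * a mod ?p < ?p. f a)"
    by (rule prod.swap_restrict) auto
  also have "\<dots> = (\<Prod>a\<in>{1..<?p}. f a ^ (?p - a - 1))"
  proof (rule prod.cong[OF refl])
    fix a assume a: "a \<in> {1..<?p}"
    then have "{s. s \<in> {1..?p - 2} \<and> a + s * a mod ?p < ?p} = {s \<in> {1..?p - 2}. a \<in> root_set ?p s}"
      by (auto simp: root_set_def)
    then show "(\<Prod>s | s \<in> {1..?p - 2} \<and> a + s * a mod ?p < ?p. f a) = f a ^ (?p - a - 1)"
      using card_root_set_containing[OF p a] by simp
  qed
  finally have "(1 - monom 1 (?p - 1)) * (\<Prod>s\<in>{1..?p - 2}. bpoly 1 s)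
      = (\<Prod>a\<in>{1..<?p}. f a) * (\<Prod>a\<in>{1..<?p}. f a ^ (?p - a - 1))"
    unfolding one_minus_monom_eq_prod f_def by simp
  also have "\<dots> = (\<Prod>a\<in>{1..<?p}. f a ^ (?p - a))"
    unfolding prod.distrib[symmetric]
    by (rule prod.cong[OF refl]) (auto simp: Suc_diff_Suc simp flip: power_Suc)
  also have "\<dots> = (\<Prod>k\<in>{1..<?p}. [:1, inverse (of_nat k :: 'p mod_ring):] ^ k)"
    by (rule prod.reindex_bij_witness[where i="\<lambda>k. ?p - k" and j="\<lambda>a. ?p - a"])
      (auto simp: f_def of_nat_diff)
  finally show ?thesis ..
qed

lemma prod_linear_power_mult_prod_reflected_bpoly_one:
  assumes "odd CARD('p::prime_card)" and "k \<in> {1..<CARD('p)}"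
  shows "(\<Prod>j\<in>{1..<CARD('p)}. [:1, inverse (of_nat j :: 'p mod_ring):] ^ j)
      * (\<Prod>s\<in>{1..CARD('p) - k - 1}. pcompose (bpoly 1 s) [:0, -1:])
    = (1 - monom 1 (CARD('p) - 1)) ^ (CARD('p) - k) * (\<Prod>s\<in>{1..k - 1}. bpoly 1 s)"
proof -
  let ?p = "CARD('p)" and ?W = "1 - monom 1 (CARD('p) - 1) :: 'p mod_ring poly"
  let ?b = "\<lambda>s. bpoly 1 s :: 'p mod_ring poly"
  define Q where "Q = (\<Prod>s\<in>{1..?p - k - 1}. ?b s)"
  have "?b s \<noteq> 0" if "s \<in> {1..?p - k - 1}" for s
  proof
    assume "?b s = 0"
    moreover have "poly (?b s) 0 = 1"
      using that assms by (intro poly_bpoly_one_0) auto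
    ultimately show False
      by simp
  qed
  then have "Q \<noteq> 0"
    by (auto simp: Q_def prod_zero_iff)
  have "(\<Prod>s\<in>{1..?p - k - 1}. pcompose (?b s) [:0, -1:]) * Q = (\<Prod>s\<in>{1..?p - k - 1}. ?W)"
    unfolding Q_def prod.distrib[symmetric]
  proof (rule prod.cong[OF refl])
    fix s assume "s \<in> {1..?p - k - 1}"
    then have "s \<in> {1..?p - 2}"
      using assms(2) by auto
    then show "pcompose (?b s) [:0, -1:] * ?b s = ?W"
      using bpoly_one_mult_reflect[OF assms(1)] by (simp only: mult.commute)
  qed
  also have "\<dots> = ?W ^ (?p - k - 1)"
    by simp
  finally have reflected: "(\<Prod>s\<in>{1..?p - k - 1}. pcompose (?b s) [:0, -1:]) * Q = ?W ^ (?p - k - 1)" .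
  have "Q = (\<Prod>s\<in>{k..?p - 2}. ?b s)"
    unfolding Q_def
  proof (rule prod.reindex_bij_witness[where i="\<lambda>s. ?p - 1 - s" and j="\<lambda>s. ?p - 1 - s"])
    fix s assume s: "s \<in> {1..?p - k - 1}"
    then show "?p - 1 - (?p - 1 - s) = s" "?p - 1 - s \<in> {k..?p - 2}"
      by auto
    from s assms(2) have "s \<in> {1..?p - 2}"
      by auto
    then show "?b (?p - 1 - s) = ?b s"
      by (rule bpoly_one_reflect_index[OF assms(1)])
  next
    fix t assume "t \<in> {k..?p - 2}"
    with assms(2) show "?p - 1 - (?p - 1 - t) = t" "?p - 1 - t \<in> {1..?p - k - 1}"
      by auto
  qed
  moreover have "{1..?p - 2} = {1..k - 1} \<union> {k..?p - 2}"
    using assms(2) by auto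
  ultimately have split: "(\<Prod>s\<in>{1..?p - 2}. ?b s) = (\<Prod>s\<in>{1..k - 1}. ?b s) * Q"
    by (simp add: prod.union_disjoint)
  have "?W ^ (?p - k) = ?W * ?W ^ (?p - k - 1)"
    using assms(2) by (simp add: Suc_diff_Suc flip: power_Suc)
  then have "(\<Prod>j\<in>{1..<?p}. [:1, inverse (of_nat j :: 'p mod_ring):] ^ j)
      * (\<Prod>s\<in>{1..?p - k - 1}. pcompose (?b s) [:0, -1:]) * Q
      = ?W ^ (?p - k) * (\<Prod>s\<in>{1..k - 1}. ?b s) * Q"
    unfolding mult.assoc reflected prod_linear_power_eq_prod_bpoly_one[OF assms(1)] split
    by (simp add: ac_simps)
  with \<open>Q \<noteq> 0\<close> show ?thesis
    by simp
qed

section \<open>Passage to \<open>\<bbbF>\<^sub>p(\<alpha>)[X]\<close>\<close>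

lemma to_fract_prod: "to_fract (prod f A) = (\<Prod>x\<in>A. to_fract (f x))"
  by (induction A rule: infinite_finite_induct) simp_all

lemma to_fract_power: "to_fract (x ^ n) = to_fract x ^ n"
  by (induction n) simp_all

lemma of_nat_eq_to_fract: "(of_nat n :: 'a::idom fract) = to_fract (of_nat n)"
  by (induction n) simp_all

lemma to_fract_monom: "to_fract (monom c n) = to_fract [:c:] * to_fract [:0, 1:] ^ n"
proof -
  have "monom c n = [:c:] * [:0, 1:] ^ n"
    by (simp add: monom_altdef)
  then show ?thesis
    by (simp only: to_fract_mult to_fract_power)
qed

lemma to_fract_monom_mult_poly_reciprocal:
  fixes q :: "'a::idom poly"
  assumes "degree q \<le> n"
  shows "to_fract (monom 1 n) * poly (map_poly (\<lambda>c. to_fract [:c:]) q) (to_fract [:w:] / to_fract [:0, 1:])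
    = to_fract (\<Sum>k\<le>n. monom (coeff q (n - k) * w ^ (n - k)) k)"
proof -
  define X where "X = (to_fract [:0, 1:] :: 'a poly fract)"
  have "X \<noteq> 0"
    by (simp add: X_def)
  have "map_poly (\<lambda>c. to_fract [:c:]) q = (\<Sum>i\<le>n. monom (to_fract [:coeff q i:]) i)"
    using degree_map_poly_le[of "\<lambda>c. to_fract [:c:]" q] assms
    by (subst poly_as_sum_of_monoms'[symmetric]) (auto simp: coeff_map_poly)
  then have "to_fract (monom 1 n) * poly (map_poly (\<lambda>c. to_fract [:c:]) q) (to_fract [:w:] / X)
      = (\<Sum>i\<le>n. X ^ n * (to_fract [:coeff q i:] * (to_fract [:w:] / X) ^ i))"
    by (simp add: to_fract_monom X_def poly_sum poly_monom sum_distrib_left one_pCons[symmetric])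
  also have "\<dots> = (\<Sum>i\<le>n. to_fract [:coeff q i * w ^ i:] * X ^ (n - i))"
  proof (rule sum.cong[OF refl])
    fix i assume "i \<in> {..n}"
    have "[:coeff q i * w ^ i:] = [:coeff q i:] * [:w:] ^ i"
      by (simp add: poly_const_pow)
    then have "to_fract [:coeff q i * w ^ i:] = to_fract [:coeff q i:] * to_fract [:w:] ^ i"
      by (simp only: to_fract_mult to_fract_power)
    moreover have "X ^ n = X ^ (n - i) * X ^ i"
      using \<open>i \<in> {..n}\<close> by (simp flip: power_add)
    ultimately show "X ^ n * (to_fract [:coeff q i:] * (to_fract [:w:] / X) ^ i)
        = to_fract [:coeff q i * w ^ i:] * X ^ (n - i)"
      using \<open>X \<noteq> 0\<close> by (simp add: power_divide)
  qed
  also have "\<dots> = (\<Sum>k\<le>n. to_fract [:coeff q (n - k) * w ^ (n - k):] * X ^ k)"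
    by (rule sum.reindex_bij_witness[where i="\<lambda>k. n - k" and j="\<lambda>i. n - i"]) auto
  finally show ?thesis
    by (simp add: X_def to_fract_monom)
qed

lemma coeff_Gpoly:
  fixes b :: "nat \<Rightarrow> 'p::prime_card mod_ring poly"
  shows "coeff (Gpoly b) k
    = (if k \<in> {1..CARD('p) - 1} then - (inverse (of_nat k) / (\<Prod>s=1..k-1. to_fract (b s))) else 0)"
  unfolding Gpoly_def by (simp add: coeff_sum coeff_monom)

lemma degree_Gpoly:
  fixes b :: "nat \<Rightarrow> 'p::prime_card mod_ring poly"
  shows "degree (Gpoly b) \<le> CARD('p) - 1"
  by (rule degree_le) (auto simp: coeff_Gpoly)

lemma prod_one_plus_indeterminate_div_eq_to_fract:
  "(\<Prod>k=1..CARD('p) - 1. (1 + to_fract [:0, 1:] / of_nat k) ^ k)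
    = to_fract (\<Prod>k\<in>{1..<CARD('p)}. [:1, inverse (of_nat k :: 'p::prime_card mod_ring):] ^ k)"
proof -
  have "{1..CARD('p) - 1} = {1..<CARD('p)}"
    using nontriv[where 'a='p] by auto
  moreover have "1 + to_fract [:0, 1:] / of_nat k = to_fract [:1, inverse (of_nat k :: 'p mod_ring):]"
    if "k \<in> {1..<CARD('p)}" for k
  proof -
    define c where "c = (of_nat k :: 'p mod_ring)"
    have "c \<noteq> 0"
      using that by (auto simp: c_def of_nat_eq_0_iff_char_dvd dest: dvd_imp_le)
    have "(of_nat k :: 'p mod_ring poly fract) = to_fract [:c:]"
      by (simp add: c_def of_nat_eq_to_fract of_nat_poly)
    moreover have "to_fract [:1, inverse c:] * to_fract [:c:] = to_fract [:c:] + to_fract [:0, 1:]"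
      using \<open>c \<noteq> 0\<close> by (simp flip: to_fract_mult to_fract_add)
    ultimately show ?thesis
      using \<open>c \<noteq> 0\<close> by (simp add: field_simps c_def)
  qed
  ultimately show ?thesis
    by (simp add: to_fract_prod to_fract_power)
qed

lemma smult_Gpoly_bpoly_one_eq_reciprocal:
  assumes "odd CARD('p::prime_card)"
  defines "\<alpha> \<equiv> to_fract [:0, 1:] :: 'p mod_ring poly fract"
  shows "smult (\<Prod>k=1..CARD('p) - 1. (1 + \<alpha> / of_nat k) ^ k) (Gpoly (\<lambda>s. bpoly 1 s))
    = - (\<Sum>k\<le>CARD('p). monom (coeff (Gpoly (\<lambda>s. pcompose (bpoly 1 s) [:0, -1:])) (CARD('p) - k)
          * (1 - \<alpha> ^ (CARD('p) - 1)) ^ (CARD('p) - k)) k)"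
proof (rule poly_eqI)
  fix k
  let ?p = "CARD('p)" and ?G = "Gpoly (\<lambda>s. pcompose (bpoly 1 s) [:0, -1:])"
  define C where "C = (\<Prod>j\<in>{1..<?p}. [:1, inverse (of_nat j :: 'p mod_ring):] ^ j)"
  define W where "W = (1 - monom 1 (?p - 1) :: 'p mod_ring poly)"
  define Dp where "Dp j = (\<Prod>s=1..j - 1. to_fract (bpoly 1 s :: 'p mod_ring poly))" for j
  define Dm where "Dm j = (\<Prod>s=1..j - 1. to_fract (pcompose (bpoly 1 s :: 'p mod_ring poly) [:0, -1:]))"
    for j
  have W: "1 - \<alpha> ^ (?p - 1) = to_fract W"
    by (simp add: W_def \<alpha>_def to_fract_monom one_pCons[symmetric])
  have C: "(\<Prod>k=1..?p - 1. (1 + \<alpha> / of_nat k) ^ k) = to_fract C"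
    unfolding C_def \<alpha>_def by (rule prod_one_plus_indeterminate_div_eq_to_fract)
  have "coeff (\<Sum>j\<le>?p. monom (coeff ?G (?p - j) * to_fract W ^ (?p - j)) j) k
      = (if k \<le> ?p then coeff ?G (?p - k) * to_fract W ^ (?p - k) else 0)"
    by (simp add: coeff_sum coeff_monom)
  moreover have "coeff (Gpoly (\<lambda>s. bpoly 1 s)) k
      = (if k \<in> {1..?p - 1} then - (inverse (of_nat k) / Dp k) else 0)"
    unfolding Dp_def by (rule coeff_Gpoly)
  moreover have "coeff ?G j = (if j \<in> {1..?p - 1} then - (inverse (of_nat j) / Dm j) else 0)" for j
    unfolding Dm_def by (rule coeff_Gpoly)
  moreover have "to_fract C * inverse (of_nat k) / Dp k
      = - (inverse (of_nat (?p - k)) / Dm (?p - k) * to_fract W ^ (?p - k))" if k: "k \<in> {1..<?p}"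
  proof -
    have "s \<in> {1..?p - 2}" if "s \<in> {1..j - 1}" "j \<in> {1..<?p}" for s j
      using that by auto
    then have "Dp k \<noteq> 0" "Dm (?p - k) \<noteq> 0"
      using k poly_bpoly_one_0[OF assms(1)]
      by (auto simp: Dp_def Dm_def prod_zero_iff poly_pcompose dest!: arg_cong[where f="\<lambda>q. poly q 0"])
    have "to_fract C * Dm (?p - k) = to_fract W ^ (?p - k) * Dp k"
      using arg_cong[OF prod_linear_power_mult_prod_reflected_bpoly_one[OF assms(1) k], of to_fract]
      by (simp add: C_def W_def Dp_def Dm_def to_fract_prod to_fract_power)
    moreover have "(of_nat k :: 'p mod_ring poly fract) \<noteq> 0"
      using k by (auto simp: of_nat_eq_to_fract of_nat_poly of_nat_eq_0_iff_char_dvd dest: dvd_imp_le)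
    moreover have "(of_nat (?p - k) :: 'p mod_ring poly fract) = - of_nat k"
      using k by (simp add: of_nat_diff of_nat_eq_to_fract of_nat_poly flip: to_fract_uminus)
    ultimately show ?thesis
      using \<open>Dp k \<noteq> 0\<close> \<open>Dm (?p - k) \<noteq> 0\<close> by (simp add: field_simps)
  qed
  ultimately show "coeff (smult (\<Prod>k=1..?p - 1. (1 + \<alpha> / of_nat k) ^ k) (Gpoly (\<lambda>s. bpoly 1 s))) k
      = coeff (- (\<Sum>j\<le>?p. monom (coeff ?G (?p - j) * (1 - \<alpha> ^ (?p - 1)) ^ (?p - j)) j)) k"
    unfolding C W using nontriv[where 'a='p] by (auto simp: mult.assoc)
qed

theorem theorem6:
  fixes p :: nat
  assumes "p = CARD('p::prime_card)" and "odd p"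
  defines "\<alpha> \<equiv> to_fract [:0, 1:] :: 'p mod_ring poly fract"
  shows "to_fract (smult (\<Prod>k=1..p-1. (1 + \<alpha> / of_nat k) ^ k) (Gpoly (\<lambda>s. bpoly 1 s)))
       = - to_fract (monom 1 p) *
         poly (map_poly (\<lambda>c. to_fract [:c:]) (Gpoly (\<lambda>s. pcompose (bpoly 1 s) [:0, -1:])))
              (to_fract [:1 - \<alpha> ^ (p - 1):] / to_fract [:0, 1:])"
proof -
  have odd: "odd CARD('p)"
    using assms by simp
  have "degree (Gpoly (\<lambda>s. pcompose (bpoly 1 s :: 'p mod_ring poly) [:0, -1:])) \<le> p"
    using degree_Gpoly[of "\<lambda>s. pcompose (bpoly 1 s :: 'p mod_ring poly) [:0, -1:]"] assms(1)
    by linarith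
  then show ?thesis
    using smult_Gpoly_bpoly_one_eq_reciprocal[OF odd]
    by (simp add: to_fract_monom_mult_poly_reciprocal assms(1) \<alpha>_def)
qed

end
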